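(* Let $I$ be an interval of a suitable and well-separated collection $\mathcal{I}$ (as in the context), regarded as a real interval $I=[a\pi/n,b\pi/n]\subseteq\mathbb{R}$ with integers $a<b$, and let $\theta_0\in\mathbb{R}$. (a) If $\theta_0\in I$, then $\frac43\le\int_I\frac{\sin(2n(\theta-\theta_0))}{\theta-\theta_0}\,d\theta\le4$. (b) If $\theta_0\notin I$, then $-1\le\int_I\frac{\sin(2n(\theta-\theta_0))}{\theta-\theta_0}\,d\theta\le2$.
   Context: $n$ is a positive integer and $\gamma$ is a constant with $0<\gamma\le 2^{-40}$. A collection $\mathcal{I}$ of pairwise disjoint intervals in $\mathbb{R}/2\pi\mathbb{Z}$ is suitable if (a) endpoints of each interval lie in $\frac{\pi}{n}\mathbb{Z}$; (b) $\mathcal{I}$ is invariant under $\theta\mapsto\pi+\theta$ and $\theta\mapsto\pi-\theta$; (c) $|\mathcal{I}|=4N$ for some integer $N\le\gamma n$. It is well-separated if moreover (d) $|I|\le6\pi/n$ for each $I\in\mathcal{I}$; (e) $d(I,J)\ge\pi/n$ for distinct $I,J\in\mathcal{I}$ (distance mod $2\pi$, infimum over points); (f) $\bigcup_{I\in\mathcal{I}}I$ is disjoint from $(\pi/2)\mathbb{Z}+[-100\pi/n,100\pi/n]$. At $\theta=\theta_0$ the integrand is interpreted as its continuous extension $2n$. *)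

theory Defs
  imports "HOL-Analysis.Analysis"
begin

text \<open>Subsets of the circle R/2piZ are represented by their 2pi-periodic
preimages in R.  The closed arc with endpoints a*pi/n and b*pi/n (a < b).\<close>
definition arc :: "nat \<Rightarrow> int \<Rightarrow> int \<Rightarrow> real set" where
  "arc n a b = {x. \<exists>k::int. x - 2 * pi * of_int k \<in> {of_int a * pi / real n .. of_int b * pi / real n}}"

text \<open>Distance between two subsets of the circle (infimum over points, mod 2pi);
for periodic preimages this is the infimum of |x - y| over the preimages.\<close>
definition circ_setdist :: "real set \<Rightarrow> real set \<Rightarrow> real" where
  "circ_setdist I J = Inf {\<bar>x - y\<bar> | x y. x \<in> I \<and> y \<in> J}"

definition suitable :: "real \<Rightarrow> nat \<Rightarrow> real set set \<Rightarrow> bool" where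
  "suitable \<gamma> n \<I> \<longleftrightarrow>
     (\<forall>I\<in>\<I>. \<exists>a b::int. a < b \<and> I = arc n a b) \<and>
     (\<forall>I\<in>\<I>. \<forall>J\<in>\<I>. I \<noteq> J \<longrightarrow> I \<inter> J = {}) \<and>
     (\<forall>I\<in>\<I>. (\<lambda>\<theta>. pi + \<theta>) ` I \<in> \<I> \<and> (\<lambda>\<theta>. pi - \<theta>) ` I \<in> \<I>) \<and>
     finite \<I> \<and> (\<exists>N::nat. card \<I> = 4 * N \<and> real N \<le> \<gamma> * real n)"

definition well_separated :: "real \<Rightarrow> nat \<Rightarrow> real set set \<Rightarrow> bool" where
  "well_separated \<gamma> n \<I> \<longleftrightarrow> suitable \<gamma> n \<I> \<and>
     (\<forall>I\<in>\<I>. \<exists>a b::int. a < b \<and> I = arc n a b \<and> of_int (b - a) * pi / real n \<le> 6 * pi / real n) \<and>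
     (\<forall>I\<in>\<I>. \<forall>J\<in>\<I>. I \<noteq> J \<longrightarrow> circ_setdist I J \<ge> pi / real n) \<and>
     (\<forall>I\<in>\<I>. \<forall>x\<in>I. \<forall>k::int. \<bar>x - of_int k * pi / 2\<bar> > 100 * pi / real n)"

text \<open>The integrand, with its continuous extension 2n at theta = theta0.\<close>
definition kern :: "nat \<Rightarrow> real \<Rightarrow> real \<Rightarrow> real" where
  "kern n \<theta>0 \<theta> = (if \<theta> = \<theta>0 then 2 * real n else sin (2 * real n * (\<theta> - \<theta>0)) / (\<theta> - \<theta>0))"

end

theory Submission
  imports Defs "HOL-Probability.Sinc_Integral"
begin

text \<open>Substituting \<open>u = 2n(\<theta> - \<theta>0)\<close> turns the integral over \<open>[a\<pi>/n, b\<pi>/n]\<close> into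
\<open>Si X - Si Y\<close> with \<open>X - Y = 2(b - a)\<pi> \<ge> 2\<pi>\<close>, so everything reduces to the range of the
sine integral: \<open>0 \<le> Si x \<le> 2\<close> for \<open>x \<ge> 0\<close>, and \<open>Si x \<ge> 4/3\<close> for \<open>x \<ge> \<pi>\<close>.  Oddness of
\<open>Si\<close> covers negative arguments.  The bounds on \<open>Si\<close> come from its monotonicity on
\<open>[0, \<pi>]\<close> and \<open>[\<pi>, 2\<pi>]\<close> together with two integrations by parts,
\<open>Si x = \<pi>/2 - cos x / x - sin x / x\<^sup>2 + O(1/x\<^sup>2)\<close>.\<close>

lemma le_limit_if_deriv_nonneg:
  fixes f f' :: "real \<Rightarrow> real"
  assumes "\<And>x. a \<le> x \<Longrightarrow> (f has_real_derivative f' x) (at x)"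
    and "\<And>x. a \<le> x \<Longrightarrow> 0 \<le> f' x"
    and "(f \<longlongrightarrow> L) at_top"
  shows "f a \<le> L"
proof (rule tendsto_lowerbound[OF assms(3)])
  show "\<forall>\<^sub>F x in at_top. f a \<le> f x"
    using eventually_ge_at_top[of a]
    by eventually_elim (rule deriv_nonneg_imp_mono[of a _ f f'], use assms in auto)
qed simp

lemma tendsto_bounded_over_power_at_top:
  fixes f :: "real \<Rightarrow> real"
  assumes "\<And>x. \<bar>f x\<bar> \<le> B" and "0 < k"
  shows "((\<lambda>x. f x / x ^ k) \<longlongrightarrow> 0) at_top"
proof (rule Lim_null_comparison)
  show "\<forall>\<^sub>F x in at_top. norm (f x / x ^ k) \<le> B / x ^ k"
    using eventually_gt_at_top[of 0]
    by eventually_elim (use assms(1) in \<open>auto simp: divide_right_mono\<close>)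
  have "LIM x at_top. (x :: real) ^ k :> at_top"
    by (rule filterlim_pow_at_top[OF assms(2) filterlim_ident])
  then show "((\<lambda>x. B / x ^ k) \<longlongrightarrow> 0) at_top"
    by (intro tendsto_divide_0[OF tendsto_const] filterlim_at_top_imp_at_infinity)
qed

text \<open>\<open>G x = Si x + cos x / x + sin x / x\<^sup>2\<close> has derivative \<open>-2 sin x / x\<^sup>3\<close>, so
\<open>G x \<mp> 1/x\<^sup>2\<close> are monotone and squeeze \<open>G\<close> towards its limit \<open>\<pi>/2\<close>.\<close>
lemma Si_asymptotic_expansion:
  fixes a :: real
  assumes "0 < a"
  shows "\<bar>Si a + cos a / a + sin a / a\<^sup>2 - pi / 2\<bar> \<le> 1 / a\<^sup>2"
proof -
  define G where "G x = Si x + cos x / x + sin x / x\<^sup>2" for x :: real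
  have G_deriv: "(G has_real_derivative - 2 * sin x / x ^ 3) (at x)" if "0 < x" for x
    unfolding G_def using that
    by (auto intro!: derivative_eq_intros DERIV_Si simp: field_simps power2_eq_square power3_eq_cube)
  have G_lim: "((\<lambda>x. G x + c / x\<^sup>2) \<longlongrightarrow> pi / 2) at_top" for c :: real
  proof -
    have "((\<lambda>x::real. cos x / x ^ 1) \<longlongrightarrow> 0) at_top"
      by (rule tendsto_bounded_over_power_at_top[where B = 1]) auto
    moreover have "((\<lambda>x::real. sin x / x ^ 2) \<longlongrightarrow> 0) at_top"
      by (rule tendsto_bounded_over_power_at_top[where B = 1]) auto
    moreover have "((\<lambda>x::real. c / x ^ 2) \<longlongrightarrow> 0) at_top"
      by (rule tendsto_bounded_over_power_at_top[where B = "\<bar>c\<bar>"]) auto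
    ultimately have "((\<lambda>x. Si x + cos x / x ^ 1 + sin x / x ^ 2 + c / x ^ 2)
        \<longlongrightarrow> pi / 2 + 0 + 0 + 0) at_top"
      by (intro tendsto_add Si_at_top)
    then show ?thesis
      by (simp add: G_def)
  qed
  have "G a + (-1) / a\<^sup>2 \<le> pi / 2"
  proof (rule le_limit_if_deriv_nonneg[where f = "\<lambda>x. G x + (-1) / x\<^sup>2"])
    fix x :: real
    assume "a \<le> x"
    then have "0 < x" using assms by linarith
    show "((\<lambda>x. G x + (-1) / x\<^sup>2) has_real_derivative 2 * (1 - sin x) / x ^ 3) (at x)"
      using G_deriv[OF \<open>0 < x\<close>] \<open>0 < x\<close>
      by (auto intro!: derivative_eq_intros simp: field_simps power2_eq_square power3_eq_cube)
    show "0 \<le> 2 * (1 - sin x) / x ^ 3"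
      using \<open>0 < x\<close> by simp
  qed (use G_lim[of "-1"] in simp)
  moreover have "- (G a + 1 / a\<^sup>2) \<le> - (pi / 2)"
  proof (rule le_limit_if_deriv_nonneg[where f = "\<lambda>x. - (G x + 1 / x\<^sup>2)"])
    fix x :: real
    assume "a \<le> x"
    then have "0 < x" using assms by linarith
    show "((\<lambda>x. - (G x + 1 / x\<^sup>2)) has_real_derivative 2 * (1 + sin x) / x ^ 3) (at x)"
      using G_deriv[OF \<open>0 < x\<close>] \<open>0 < x\<close>
      by (auto intro!: derivative_eq_intros simp: field_simps power2_eq_square power3_eq_cube)
    show "0 \<le> 2 * (1 + sin x) / x ^ 3"
      using \<open>0 < x\<close> sin_ge_minus_one[of x] by (smt (verit) divide_nonneg_pos zero_less_power)
  qed (use tendsto_minus[OF G_lim[of 1]] in simp)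
  ultimately show ?thesis
    unfolding G_def abs_le_iff by (simp add: field_simps)
qed

lemma Si_0: "Si 0 = 0"
  using Si_neg[of 0] by simp

lemma Si_mono_on_0_pi:
  assumes "0 \<le> x" "x \<le> y" "y \<le> pi"
  shows "Si x \<le> Si y"
proof (rule deriv_nonneg_imp_mono[OF DERIV_Si])
  fix t
  assume "t \<in> {x..y}"
  then have "0 \<le> t" "t \<le> pi" using assms by auto
  then show "0 \<le> sinc t" by (simp add: sin_ge_zero)
qed (rule assms(2))

lemma Si_antimono_on_pi_2pi:
  assumes "pi \<le> x" "x \<le> y" "y \<le> 2 * pi"
  shows "Si y \<le> Si x"
proof (rule deriv_nonpos_imp_antimono[OF DERIV_Si])
  fix t
  assume "t \<in> {x..y}"
  then have "pi \<le> t" "t \<le> 2 * pi" using assms by auto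
  then have "0 < t" "0 \<le> t - pi" "t - pi \<le> pi" using pi_gt_zero by linarith+
  moreover have "sin t = - sin (t - pi)" by (simp add: sin_diff)
  ultimately show "sinc t \<le> 0" using sin_ge_zero[of "t - pi"] by (simp add: divide_nonpos_pos)
qed (rule assms(2))

lemma Si_pi_le_2: "Si pi \<le> 2"
proof -
  have "Si pi \<le> pi / 2 + 1 / pi + 1 / pi\<^sup>2"
    using Si_asymptotic_expansion[OF pi_gt_zero] by (simp add: abs_le_iff)
  also have "\<dots> \<le> 3.15 / 2 + 1 / 3.14 + 1 / 3.14\<^sup>2"
    using pi_approx by (intro add_mono divide_right_mono divide_left_mono power_mono) auto
  also have "\<dots> \<le> 2" by (simp add: power2_eq_square)
  finally show ?thesis .
qed

lemma Si_bounds_beyond_2pi: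
  assumes "2 * pi \<le> x"
  shows "4 / 3 \<le> Si x" "Si x \<le> 2"
proof -
  have "0 < x" using assms pi_gt_zero by linarith
  have "\<bar>cos x / x\<bar> \<le> 1 / x" "\<bar>sin x / x\<^sup>2\<bar> \<le> 1 / x\<^sup>2"
    using \<open>0 < x\<close> by (auto simp: abs_divide divide_right_mono)
  then have "\<bar>Si x - pi / 2\<bar> \<le> 1 / x + 2 / x\<^sup>2"
    using Si_asymptotic_expansion[OF \<open>0 < x\<close>] unfolding abs_le_iff by linarith
  also have "\<dots> \<le> 1 / 6 + 2 / 6\<^sup>2"
    using assms pi_gt3 by (intro add_mono divide_left_mono power_mono) auto
  finally have "\<bar>Si x - pi / 2\<bar> \<le> 2 / 9" by simp
  moreover have "3.14 \<le> pi" "pi \<le> 3.15"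
    using pi_approx by simp_all
  ultimately show "4 / 3 \<le> Si x" and "Si x \<le> 2"
    unfolding abs_le_iff by simp_all
qed

lemma Si_nonneg_le_2:
  assumes "0 \<le> x"
  shows "0 \<le> Si x \<and> Si x \<le> 2"
proof -
  consider "x \<le> pi" | "pi \<le> x" "x \<le> 2 * pi" | "2 * pi \<le> x" by linarith
  then show ?thesis
  proof cases
    case 1
    then show ?thesis
      using Si_mono_on_0_pi[of 0 x] Si_mono_on_0_pi[of x pi] Si_pi_le_2 assms by (simp add: Si_0)
  next
    case 2
    then show ?thesis
      using Si_antimono_on_pi_2pi[of pi x] Si_antimono_on_pi_2pi[of x "2 * pi"]
        Si_bounds_beyond_2pi[of "2 * pi"] Si_pi_le_2 by simp
  next
    case 3
    then show ?thesis
      using Si_bounds_beyond_2pi[of x] by simp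
  qed
qed

lemma Si_ge_4_3:
  assumes "pi \<le> x"
  shows "4 / 3 \<le> Si x"
proof (cases "x \<le> 2 * pi")
  case True
  then show ?thesis
    using Si_antimono_on_pi_2pi[of x "2 * pi"] Si_bounds_beyond_2pi[of "2 * pi"] assms by simp
next
  case False
  then show ?thesis
    using Si_bounds_beyond_2pi[of x] by simp
qed

lemma Si_diff_bounds_across_0:
  assumes "Y \<le> 0" "0 \<le> X" "Y + 2 * pi \<le> X"
  shows "4 / 3 \<le> Si X - Si Y \<and> Si X - Si Y \<le> 4"
proof -
  have "Si Y = - Si (- Y)"
    using Si_neg[of "- Y"] assms(1) by simp
  moreover have "pi \<le> X \<or> pi \<le> - Y"
    using assms(3) by linarith
  ultimately show ?thesis
    using Si_nonneg_le_2[of X] Si_nonneg_le_2[of "- Y"] Si_ge_4_3[of X] Si_ge_4_3[of "- Y"] assms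
    by auto
qed

lemma Si_diff_bounds_nonneg:
  assumes "0 \<le> Y" "Y + pi \<le> X"
  shows "-1 \<le> Si X - Si Y \<and> Si X - Si Y \<le> 2"
  using Si_nonneg_le_2[of X] Si_nonneg_le_2[of Y] Si_ge_4_3[of X] assms pi_gt_zero by linarith

lemma Si_diff_bounds_one_sided:
  assumes "0 \<le> Y \<or> X \<le> 0" "Y + pi \<le> X"
  shows "-1 \<le> Si X - Si Y \<and> Si X - Si Y \<le> 2"
  using assms(1)
proof
  assume "X \<le> 0"
  then have "Si X = - Si (- X)" "Si Y = - Si (- Y)"
    using Si_neg[of "- X"] Si_neg[of "- Y"] assms(2) pi_gt_zero by simp_all
  then show ?thesis
    using Si_diff_bounds_nonneg[of "- X" "- Y"] \<open>X \<le> 0\<close> assms(2) by simp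
qed (use Si_diff_bounds_nonneg assms(2) in blast)

lemma kern_has_integral:
  assumes "\<alpha> \<le> \<beta>"
  shows "(kern n \<theta>0 has_integral Si (2 * real n * (\<beta> - \<theta>0)) - Si (2 * real n * (\<alpha> - \<theta>0))) {\<alpha>..\<beta>}"
proof (rule fundamental_theorem_of_calculus[OF assms])
  fix x
  have "((\<lambda>t. Si (2 * real n * (t - \<theta>0))) has_real_derivative
      sinc (2 * real n * (x - \<theta>0)) * (2 * real n)) (at x)"
    by (rule DERIV_chain2[OF DERIV_Si]) (auto intro!: derivative_eq_intros)
  moreover have "sinc (2 * real n * (x - \<theta>0)) * (2 * real n) = kern n \<theta>0 x"
    by (auto simp: kern_def)
  ultimately show "((\<lambda>t. Si (2 * real n * (t - \<theta>0))) has_vector_derivative kern n \<theta>0 x)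
      (at x within {\<alpha>..\<beta>})"
    by (auto simp: has_real_derivative_iff_has_vector_derivative[symmetric]
        intro: has_field_derivative_at_within)
qed

theorem lemma5p8:
  fixes \<gamma> :: real and n :: nat and \<I> :: "real set set" and I :: "real set"
    and a b :: int and \<theta>0 :: real
  assumes "0 < n" and "0 < \<gamma>" and "\<gamma> \<le> 2 powr (-40)"
    and "well_separated \<gamma> n \<I>" and "I \<in> \<I>"
    and "a < b" and "I = arc n a b"
  shows "(\<theta>0 \<in> {of_int a * pi / real n .. of_int b * pi / real n} \<longrightarrow>
            4/3 \<le> integral {of_int a * pi / real n .. of_int b * pi / real n} (kern n \<theta>0) \<and>
            integral {of_int a * pi / real n .. of_int b * pi / real n} (kern n \<theta>0) \<le> 4) \<and>
         (\<theta>0 \<notin> {of_int a * pi / real n .. of_int b * pi / real n} \<longrightarrow>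
            -1 \<le> integral {of_int a * pi / real n .. of_int b * pi / real n} (kern n \<theta>0) \<and>
            integral {of_int a * pi / real n .. of_int b * pi / real n} (kern n \<theta>0) \<le> 2)"
proof -
  define \<alpha> \<beta> where "\<alpha> = of_int a * pi / real n" and "\<beta> = of_int b * pi / real n"
  define X Y where "X = 2 * real n * (\<beta> - \<theta>0)" and "Y = 2 * real n * (\<alpha> - \<theta>0)"
  have "\<alpha> \<le> \<beta>"
    using \<open>a < b\<close> by (simp add: \<alpha>_def \<beta>_def divide_right_mono)
  have "X - Y = 2 * of_int (b - a) * pi"
    using \<open>0 < n\<close> by (simp add: X_def Y_def \<alpha>_def \<beta>_def field_simps)
  moreover have "2 * pi \<le> 2 * of_int (b - a) * pi"
    using \<open>a < b\<close> by simp
  ultimately have gap: "Y + 2 * pi \<le> X"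
    by linarith
  have integral: "integral {\<alpha>..\<beta>} (kern n \<theta>0) = Si X - Si Y"
    unfolding X_def Y_def by (rule integral_unique[OF kern_has_integral[OF \<open>\<alpha> \<le> \<beta>\<close>]])
  have "4 / 3 \<le> Si X - Si Y \<and> Si X - Si Y \<le> 4" if "\<theta>0 \<in> {\<alpha>..\<beta>}"
    using that Si_diff_bounds_across_0[OF _ _ gap] by (simp add: X_def Y_def mult_nonneg_nonpos)
  moreover have "-1 \<le> Si X - Si Y \<and> Si X - Si Y \<le> 2" if "\<theta>0 \<notin> {\<alpha>..\<beta>}"
  proof (rule Si_diff_bounds_one_sided)
    show "0 \<le> Y \<or> X \<le> 0"
      using that by (auto simp: X_def Y_def mult_nonneg_nonpos)
    show "Y + pi \<le> X"
      using gap pi_gt_zero by linarith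
  qed
  ultimately show ?thesis
    unfolding \<alpha>_def[symmetric] \<beta>_def[symmetric] integral by blast
qed

end
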